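(* Let $\Upsilon_1=\{d(\chi_C): C\subseteq V,\ \kappa(C,V\setminus C)=1\}$ be the set of bond elements of $L$. Then $\Upsilon_1$ generates $L$, and the graph on $L$ in which $\lambda,\mu$ are adjacent iff $V^c_\lambda\cap V^c_\mu$ is a face of codimension one of both cells (the one-skeleton of the Delaunay dual of the Voronoi diagram) is isomorphic to the Cayley graph $\mathrm{Cay}(L,\Upsilon_1)$.
   Context: $G=(V,E)$ is a finite connected graph; each edge gives oriented edges $e,\bar e$. Real $1$-cochains are $x$ on oriented edges with $x_{\bar e}=-x_e$, $\langle x,y\rangle=\sum_{e\in E}x_ey_e$, $q(x)=\langle x,x\rangle$. For $f:V\to\mathbb R$, $d(f)(e)=f(\text{head}(e))-f(\text{tail}(e))$; $K=d(\mathbb R^V)$ and $L=d(\mathbb Z^V)$. $V^c_\lambda=\{x\in K: q(x-\lambda)\le q(x-\mu)\ \forall\mu\in L\}$. $\chi_C$ is the characteristic function of $C$. If $G[C]$ has $k$ and $G[V\setminus C]$ has $r$ connected components, $\kappa(C,V\setminus C)=k+r-1$. *)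

theory Defs
  imports "HOL-Analysis.Analysis"
begin

(* A finite (multi)graph: vertex set V, edge set E (finite, since the edge type is finite),
   each edge e carries a fixed reference orientation from src e to tgt e.
   A real 1-cochain x is determined by its values x $ e on the reference orientations
   (x on the reversed edge is -x $ e); coordinates outside E are 0 for elements of K. *)

definition dcob :: "'e::finite set \<Rightarrow> ('e \<Rightarrow> 'v) \<Rightarrow> ('e \<Rightarrow> 'v) \<Rightarrow> ('v \<Rightarrow> real) \<Rightarrow> real^'e" where
  "dcob E src tgt f = (\<chi> e. if e \<in> E then f (tgt e) - f (src e) else 0)"

definition qf :: "'e::finite set \<Rightarrow> real^'e \<Rightarrow> real" where
  "qf E x = (\<Sum>e\<in>E. (x $ e)^2)"

definition Kspace :: "'e::finite set \<Rightarrow> ('e \<Rightarrow> 'v) \<Rightarrow> ('e \<Rightarrow> 'v) \<Rightarrow> (real^'e) set" where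
  "Kspace E src tgt = range (dcob E src tgt)"

definition Lat :: "'e::finite set \<Rightarrow> ('e \<Rightarrow> 'v) \<Rightarrow> ('e \<Rightarrow> 'v) \<Rightarrow> (real^'e) set" where
  "Lat E src tgt = {dcob E src tgt f | f. \<forall>v. f v \<in> \<int>}"

definition voronoi :: "'e::finite set \<Rightarrow> ('e \<Rightarrow> 'v) \<Rightarrow> ('e \<Rightarrow> 'v) \<Rightarrow> real^'e \<Rightarrow> (real^'e) set" where
  "voronoi E src tgt a =
     {x \<in> Kspace E src tgt. \<forall>m\<in>Lat E src tgt. qf E (x - a) \<le> qf E (x - m)}"

definition adjrel :: "'e set \<Rightarrow> ('e \<Rightarrow> 'v) \<Rightarrow> ('e \<Rightarrow> 'v) \<Rightarrow> 'v set \<Rightarrow> ('v \<times> 'v) set" where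
  "adjrel E src tgt S =
     {(src e, tgt e) | e. e \<in> E \<and> src e \<in> S \<and> tgt e \<in> S}
   \<union> {(tgt e, src e) | e. e \<in> E \<and> src e \<in> S \<and> tgt e \<in> S}"

definition ncomp :: "'e set \<Rightarrow> ('e \<Rightarrow> 'v) \<Rightarrow> ('e \<Rightarrow> 'v) \<Rightarrow> 'v set \<Rightarrow> nat" where
  "ncomp E src tgt S = card ((\<lambda>v. (adjrel E src tgt S)\<^sup>* `` {v}) ` S)"

definition graph_connected :: "'v set \<Rightarrow> 'e set \<Rightarrow> ('e \<Rightarrow> 'v) \<Rightarrow> ('e \<Rightarrow> 'v) \<Rightarrow> bool" where
  "graph_connected V E src tgt \<longleftrightarrow>
     V \<noteq> {} \<and> (\<forall>u\<in>V. \<forall>v\<in>V. (u, v) \<in> (adjrel E src tgt V)\<^sup>*)"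

definition kappa :: "'v set \<Rightarrow> 'e set \<Rightarrow> ('e \<Rightarrow> 'v) \<Rightarrow> ('e \<Rightarrow> 'v) \<Rightarrow> 'v set \<Rightarrow> int" where
  "kappa V E src tgt C = int (ncomp E src tgt C) + int (ncomp E src tgt (V - C)) - 1"

definition charf :: "'v set \<Rightarrow> 'v \<Rightarrow> real" where
  "charf C = (\<lambda>v. if v \<in> C then 1 else 0)"

definition bonds :: "'v set \<Rightarrow> 'e::finite set \<Rightarrow> ('e \<Rightarrow> 'v) \<Rightarrow> ('e \<Rightarrow> 'v) \<Rightarrow> (real^'e) set" where
  "bonds V E src tgt = {dcob E src tgt (charf C) | C. C \<subseteq> V \<and> kappa V E src tgt C = 1}"

definition subgroup_gen :: "'a::ab_group_add set \<Rightarrow> 'a set" where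
  "subgroup_gen S = \<Inter>{H. S \<subseteq> H \<and> 0 \<in> H \<and> (\<forall>a\<in>H. \<forall>b\<in>H. a - b \<in> H)}"

definition delaunay_adj :: "'e::finite set \<Rightarrow> ('e \<Rightarrow> 'v) \<Rightarrow> ('e \<Rightarrow> 'v) \<Rightarrow> real^'e \<Rightarrow> real^'e \<Rightarrow> bool" where
  "delaunay_adj E src tgt a b \<longleftrightarrow>
     (let F = voronoi E src tgt a \<inter> voronoi E src tgt b in
        F face_of voronoi E src tgt a \<and> F face_of voronoi E src tgt b \<and>
        aff_dim F = aff_dim (voronoi E src tgt a) - 1 \<and>
        aff_dim F = aff_dim (voronoi E src tgt b) - 1)"

definition cayley_adj :: "'a::ab_group_add set \<Rightarrow> 'a \<Rightarrow> 'a \<Rightarrow> bool" where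
  "cayley_adj S a b \<longleftrightarrow> (b - a \<in> S \<or> a - b \<in> S)"

end

theory Submission
  imports Defs
begin

(* Call l in L strictly relevant if l is nonzero and
   m.l < m.m for every lattice vector m other than 0 and l.  Voronoi's classical criterion
   holds: the cells of a and b meet in a common facet iff b - a is strictly relevant.  A
   second general fact: a subset S of L generates L if every nonzero lattice vector outside
   S is a sum of two nonzero lattice vectors at a non-obtuse angle (induction on the
   integral squared length).

   For the lattice L = d(Z^V) of a connected graph, every vector d f is zero, a bond, or
   splits in this way (truncating f at an intermediate level, or separating a component of
   a disconnected shore of a cut); conversely bonds are strictly relevant by an edge-by-edge
   estimate.  Hence the bonds generate L, the strictly relevant vectors are exactly the
   bonds, and the identity map is an isomorphism from the Delaunay graph onto
   Cay(L, bonds). *)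

definition vcell :: "'a::euclidean_space set \<Rightarrow> 'a set \<Rightarrow> 'a \<Rightarrow> 'a set" where
  "vcell K L a = {x \<in> K. \<forall>m\<in>L. dist x a \<le> dist x m}"

(* l is strictly relevant iff l is nonzero and the midpoint l/2 is strictly closer to 0
   and l than to any other lattice point (|l/2 - m|^2 - |l/2|^2 = m.m - m.l). *)
definition strictly_relevant :: "'a::real_inner set \<Rightarrow> 'a \<Rightarrow> bool" where
  "strictly_relevant L l \<longleftrightarrow> l \<noteq> 0 \<and> (\<forall>m\<in>L. m \<noteq> 0 \<longrightarrow> m \<noteq> l \<longrightarrow> m \<bullet> l < m \<bullet> m)"

definition obtuse_free_split :: "'a::real_inner set \<Rightarrow> 'a \<Rightarrow> bool" where
  "obtuse_free_split L l \<longleftrightarrow>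
     (\<exists>\<mu> \<nu>. \<mu> \<in> L \<and> \<nu> \<in> L \<and> \<mu> \<noteq> 0 \<and> \<nu> \<noteq> 0 \<and> l = \<mu> + \<nu> \<and> 0 \<le> \<mu> \<bullet> \<nu>)"

lemma Ints_le_cases:
  fixes a b :: real
  assumes "a \<in> \<int>" "b \<in> \<int>" "a \<le> b"
  shows "b = a \<or> b = a + 1 \<or> a + 2 \<le> b"
proof -
  obtain k where k: "b - a = of_int k" using assms(1,2) Ints_diff by (metis Ints_cases)
  moreover have "0 \<le> k" using assms(3) k by simp
  ultimately show ?thesis by (cases "k = 0 \<or> k = 1") auto
qed

lemma dist_le_iff_inner:
  fixes x a m :: "'a::real_inner"
  shows "dist x a \<le> dist x m \<longleftrightarrow> 2 * (x \<bullet> m) - m \<bullet> m \<le> 2 * (x \<bullet> a) - a \<bullet> a"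
  by (simp add: dist_norm norm_le inner_diff_left inner_diff_right inner_commute) arith

lemma split_parts_shorter:
  assumes "l = \<mu> + \<nu>" "\<mu> \<noteq> 0" "\<nu> \<noteq> 0" "0 \<le> \<mu> \<bullet> \<nu>"
  shows "\<mu> \<bullet> \<mu> < l \<bullet> l" "\<nu> \<bullet> \<nu> < l \<bullet> l"
proof -
  have "l \<bullet> l = \<mu> \<bullet> \<mu> + \<nu> \<bullet> \<nu> + 2 * (\<mu> \<bullet> \<nu>)"
    using assms(1) by (simp add: inner_add_left inner_add_right inner_commute)
  moreover have "0 < \<mu> \<bullet> \<mu>" "0 < \<nu> \<bullet> \<nu>" using assms(2,3) by auto
  ultimately show "\<mu> \<bullet> \<mu> < l \<bullet> l" "\<nu> \<bullet> \<nu> < l \<bullet> l" using assms(4) by linarith+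
qed

(* A vector admitting a non-obtuse splitting is not strictly relevant (test with m = mu). *)
lemma split_not_strictly_relevant:
  assumes "obtuse_free_split L l"
  shows "\<not> strictly_relevant L l"
proof
  assume rel: "strictly_relevant L l"
  obtain \<mu> \<nu> where mn: "\<mu> \<in> L" "\<nu> \<in> L" "\<mu> \<noteq> 0" "\<nu> \<noteq> 0" "l = \<mu> + \<nu>" "0 \<le> \<mu> \<bullet> \<nu>"
    using assms unfolding obtuse_free_split_def by blast
  have "\<mu> \<noteq> l" using mn(4,5) by auto
  then have "\<mu> \<bullet> l < \<mu> \<bullet> \<mu>" using rel mn(1,3) unfolding strictly_relevant_def by blast
  then show False using mn(5,6) by (simp add: inner_add_right)
qed

locale integral_lattice =
  fixes K L :: "'a::euclidean_space set"
  assumes subspace_K: "subspace K"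
    and L_subset_K: "L \<subseteq> K"
    and zero_L: "0 \<in> L"
    and diff_L: "\<And>a b. a \<in> L \<Longrightarrow> b \<in> L \<Longrightarrow> a - b \<in> L"
    and inner_Ints: "\<And>a b. a \<in> L \<Longrightarrow> b \<in> L \<Longrightarrow> a \<bullet> b \<in> \<int>"
begin

lemma minus_L: "a \<in> L \<Longrightarrow> - a \<in> L"
  using diff_L[OF zero_L] by fastforce

lemma add_L: "a \<in> L \<Longrightarrow> b \<in> L \<Longrightarrow> a + b \<in> L"
  using diff_L[of a "- b"] minus_L by simp

lemma obtuse_free_split_uminus: "obtuse_free_split L l \<Longrightarrow> obtuse_free_split L (- l)"
  unfolding obtuse_free_split_def
  by (elim exE conjE, rule_tac x="- \<mu>" in exI, rule_tac x="- \<nu>" in exI) (auto simp: minus_L)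

lemma sq_norm_ge_1: "m \<in> L \<Longrightarrow> m \<noteq> 0 \<Longrightarrow> 1 \<le> m \<bullet> m"
  using Ints_nonzero_abs_ge1[OF inner_Ints[of m m]] by simp

lemma vcell_0: "vcell K L 0 = {x \<in> K. \<forall>m\<in>L. 2 * (x \<bullet> m) \<le> m \<bullet> m}"
  unfolding vcell_def dist_le_iff_inner by simp

lemma vcell_0_subset: "vcell K L 0 \<subseteq> K"
  unfolding vcell_def by auto

lemma vcell_translate:
  assumes a: "a \<in> L"
  shows "vcell K L a = (+) a ` vcell K L 0"
proof -
  have aK: "a \<in> K" using a L_subset_K by auto
  have "x \<in> vcell K L a \<longleftrightarrow> x - a \<in> vcell K L 0" for x
  proof -
    have "x \<in> K \<longleftrightarrow> x - a \<in> K"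
      using subspace_diff[OF subspace_K _ aK] subspace_add[OF subspace_K _ aK, of "x - a"] by auto
    moreover have "(\<forall>m\<in>L. dist x a \<le> dist x m) \<longleftrightarrow> (\<forall>m\<in>L. dist (x - a) 0 \<le> dist (x - a) m)"
    proof (intro iffI ballI)
      fix m assume close: "\<forall>m\<in>L. dist x a \<le> dist x m" and m: "m \<in> L"
      have "dist (x - a) 0 = dist x a" by (simp add: dist_norm)
      also have "\<dots> \<le> dist x (m + a)" using close add_L[OF m a] by blast
      also have "\<dots> = dist (x - a) m" by (simp add: dist_norm algebra_simps)
      finally show "dist (x - a) 0 \<le> dist (x - a) m" .
    next
      fix m assume close: "\<forall>m\<in>L. dist (x - a) 0 \<le> dist (x - a) m" and m: "m \<in> L"
      have "dist x a = dist (x - a) 0" by (simp add: dist_norm)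
      also have "\<dots> \<le> dist (x - a) (m - a)" using close diff_L[OF m a] by blast
      also have "\<dots> = dist x m" by (simp add: dist_norm algebra_simps)
      finally show "dist x a \<le> dist x m" .
    qed
    ultimately show ?thesis unfolding vcell_def by auto
  qed
  then show ?thesis by (force simp: image_iff algebra_simps)
qed

lemma vcell_Int_translate:
  assumes "a \<in> L" "b \<in> L"
  shows "vcell K L a \<inter> vcell K L b = (+) a ` (vcell K L 0 \<inter> vcell K L (b - a))"
proof -
  have "vcell K L b = (+) a ` ((+) (b - a) ` vcell K L 0)"
    using vcell_translate[OF assms(2)] by (simp add: image_image algebra_simps)
  also have "\<dots> = (+) a ` vcell K L (b - a)"
    using vcell_translate[OF diff_L[OF assms(2,1)]] by simp
  finally show ?thesis
    using vcell_translate[OF assms(1)] by (simp add: image_Int inj_on_def)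
qed

lemma convex_vcell_0: "convex (vcell K L 0)"
proof -
  have eq: "vcell K L 0 = K \<inter> (\<Inter>m\<in>L. {x. m \<bullet> x \<le> (m \<bullet> m) / 2})"
    unfolding vcell_0 by (auto simp: inner_commute mult.commute)
  show ?thesis unfolding eq
    by (intro convex_Int subspace_imp_convex subspace_K convex_INT ballI convex_halfspace_le)
qed

(* The ball of radius 1/2 around the origin (inside K) lies in the cell of the origin,
   because all nonzero lattice vectors have length at least one; so cells are
   full-dimensional in K. *)

lemma aff_dim_vcell_0: "aff_dim (vcell K L 0) = aff_dim K"
proof -
  have ball_in_cell: "K \<inter> ball 0 (1/2) \<subseteq> vcell K L 0"
  proof
    fix x assume x: "x \<in> K \<inter> ball 0 (1/2)"
    have "2 * (x \<bullet> m) \<le> m \<bullet> m" if m: "m \<in> L" for m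
    proof (cases "m = 0")
      case False
      have "1 \<le> norm m"
        using sq_norm_ge_1[OF m False] by (simp add: norm_eq_sqrt_inner real_sqrt_ge_one)
      have "2 * (x \<bullet> m) \<le> 2 * (norm x * norm m)" using norm_cauchy_schwarz[of x m] by simp
      also have "\<dots> = (2 * norm x) * norm m" by simp
      also have "\<dots> \<le> 1 * norm m" using x by (intro mult_right_mono) auto
      also have "\<dots> \<le> norm m * norm m" using \<open>1 \<le> norm m\<close> by (simp add: mult_le_cancel_left1)
      finally show ?thesis by (simp add: power2_norm_eq_inner[symmetric] power2_eq_square)
    qed simp
    then show "x \<in> vcell K L 0" unfolding vcell_0 using x by auto
  qed
  have "aff_dim (K \<inter> ball 0 (1/2)) = aff_dim K"
    by (rule aff_dim_convex_Int_open) (use subspace_imp_convex[OF subspace_K] subspace_0[OF subspace_K] in auto)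
  then show ?thesis
    using aff_dim_subset[OF ball_in_cell] aff_dim_subset[OF vcell_0_subset] by simp
qed

lemma aff_dim_vcell: "a \<in> L \<Longrightarrow> aff_dim (vcell K L a) = aff_dim K"
  using vcell_translate aff_dim_translation_eq aff_dim_vcell_0 by metis

lemma vcell_0_Int:
  assumes l: "l \<in> L"
  shows "vcell K L 0 \<inter> vcell K L l = vcell K L 0 \<inter> {x. l \<bullet> x = (l \<bullet> l) / 2}"
proof (intro set_eqI iffI)
  fix x assume x: "x \<in> vcell K L 0 \<inter> vcell K L l"
  then have "2 * (x \<bullet> l) \<le> l \<bullet> l" using l unfolding vcell_0 by auto
  moreover have "l \<bullet> l \<le> 2 * (x \<bullet> l)"
    using x zero_L unfolding vcell_def dist_le_iff_inner by force
  ultimately show "x \<in> vcell K L 0 \<inter> {x. l \<bullet> x = (l \<bullet> l) / 2}"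
    using x by (auto simp: dist_le_iff_inner inner_commute)
next
  fix x assume x: "x \<in> vcell K L 0 \<inter> {x. l \<bullet> x = (l \<bullet> l) / 2}"
  then have "\<forall>m\<in>L. dist x l \<le> dist x m" unfolding vcell_0 by (auto simp: dist_le_iff_inner inner_commute)
  then show "x \<in> vcell K L 0 \<inter> vcell K L l" using x unfolding vcell_def by auto
qed

(* The common part of two cells is a face of each, exposed by the bisecting hyperplane. *)
lemma vcell_Int_face:
  assumes "a \<in> L" "b \<in> L"
  shows "vcell K L a \<inter> vcell K L b face_of vcell K L a"
proof -
  have ba: "b - a \<in> L" using diff_L[OF assms(2,1)] .
  have "\<And>x. x \<in> vcell K L 0 \<Longrightarrow> (b - a) \<bullet> x \<le> ((b - a) \<bullet> (b - a)) / 2"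
    using ba unfolding vcell_0 by (auto simp: inner_commute)
  then have "vcell K L 0 \<inter> vcell K L (b - a) face_of vcell K L 0"
    unfolding vcell_0_Int[OF ba] by (rule face_of_Int_supporting_hyperplane_le[OF convex_vcell_0])
  then show ?thesis using vcell_Int_translate[OF assms] vcell_translate[OF assms(1)] by simp
qed

lemma aff_dim_bisector:
  assumes "l \<in> K" "l \<noteq> 0"
  shows "aff_dim (K \<inter> {x. l \<bullet> x = (l \<bullet> l) / 2}) = aff_dim K - 1"
proof -
  have "(1/2) *\<^sub>R l \<in> K \<inter> {x. l \<bullet> x = (l \<bullet> l) / 2}"
    using subspace_scale[OF subspace_K assms(1)] by auto
  moreover have "\<not> K \<subseteq> {x. l \<bullet> x = (l \<bullet> l) / 2}" using subspace_0[OF subspace_K] assms(2) by auto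
  ultimately show ?thesis
    using aff_dim_affine_Int_hyperplane[OF subspace_imp_affine[OF subspace_K], of l "(l \<bullet> l) / 2"]
    by auto
qed

lemma strictly_relevant_gap:
  assumes "strictly_relevant L l" "l \<in> L" "m \<in> L" "m \<noteq> 0" "m \<noteq> l"
  shows "1 \<le> m \<bullet> m - m \<bullet> l"
proof -
  have "0 < m \<bullet> m - m \<bullet> l" using assms unfolding strictly_relevant_def by auto
  moreover have "m \<bullet> m - m \<bullet> l \<in> \<int>" using inner_Ints assms(2,3) by auto
  ultimately show ?thesis using Ints_nonzero_abs_ge1 by fastforce
qed

(* Points of the bisecting hyperplane close enough to the midpoint of a strictly relevant
   vector l lie in the cell of 0: lattice vectors near l are beaten by the gap, far away
   ones by their length. *)
lemma near_midpoint_in_vcell_0: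
  assumes rel: "strictly_relevant L l" and l: "l \<in> L"
    and x: "x \<in> K" "l \<bullet> x = (l \<bullet> l) / 2"
    and near: "norm (x - (1/2) *\<^sub>R l) < 1 / (2 * (norm l + 1))"
  shows "x \<in> vcell K L 0"
proof -
  define y where "y = x - (1/2) *\<^sub>R l"
  define r where "r = 1 / (2 * (norm l + 1))"
  have "0 < norm l + 1" using norm_ge_zero[of l] by linarith
  then have r: "0 < r" "2 * r * (norm l + 1) = 1" unfolding r_def by auto
  have "2 * (x \<bullet> m) \<le> m \<bullet> m" if m: "m \<in> L" for m
  proof (cases "m = 0 \<or> m = l")
    case True
    then show ?thesis using x(2) by (auto simp: inner_commute)
  next
    case False
    have gap: "1 \<le> m \<bullet> m - m \<bullet> l" using strictly_relevant_gap[OF rel l m] False by auto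
    have xm: "x \<bullet> m = y \<bullet> m + (m \<bullet> l) / 2" unfolding y_def by (simp add: inner_diff_left inner_commute[of l m])
    have "2 * (y \<bullet> m) \<le> 2 * r * norm m"
      using norm_cauchy_schwarz[of y m] near mult_right_mono[of "norm y" r "norm m"]
      unfolding y_def r_def by auto
    also have "\<dots> \<le> m \<bullet> m - m \<bullet> l"
    proof (cases "norm m \<le> norm l + 1")
      case True
      then have "2 * r * norm m \<le> 2 * r * (norm l + 1)" using r by (intro mult_left_mono) auto
      then show ?thesis using r gap by linarith
    next
      case False
      have "2 * r \<le> 1" using r(2) mult_left_mono[of 1 "norm l + 1" "2 * r"] r(1) by simp
      then have "2 * r * norm m \<le> norm m * (norm m - norm l)"
        using False mult_mono[of "2 * r" "norm m - norm l" "norm m" "norm m"] by (simp add: mult.commute)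
      also have "\<dots> \<le> m \<bullet> m - m \<bullet> l"
        using norm_cauchy_schwarz[of m l] by (simp add: algebra_simps power2_norm_eq_inner[symmetric] power2_eq_square)
      finally show ?thesis .
    qed
    finally show ?thesis using xm by linarith
  qed
  then show ?thesis unfolding vcell_0 using x(1) by auto
qed

(* Voronoi: the cells of 0 and a strictly relevant l meet in a facet, since the common part
   contains a relatively open piece of their bisecting hyperplane. *)
lemma facet_if_strictly_relevant:
  assumes rel: "strictly_relevant L l" and l: "l \<in> L"
  shows "aff_dim (vcell K L 0 \<inter> vcell K L l) = aff_dim K - 1"
proof -
  define H where "H = K \<inter> {x. l \<bullet> x = (l \<bullet> l) / 2}"
  define c where "c = (1/2) *\<^sub>R l"
  define r where "r = 1 / (2 * (norm l + 1))"
  have lK: "l \<in> K" using l L_subset_K by auto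
  have "0 < norm l + 1" using norm_ge_zero[of l] by linarith
  then have r: "0 < r" unfolding r_def by simp
  have cH: "c \<in> H" unfolding c_def H_def using subspace_scale[OF subspace_K lK] by auto
  have piece: "H \<inter> ball c r \<subseteq> vcell K L 0 \<inter> vcell K L l"
  proof
    fix x assume x: "x \<in> H \<inter> ball c r"
    then have "x \<in> vcell K L 0"
      using near_midpoint_in_vcell_0[OF rel l] unfolding H_def c_def r_def
      by (auto simp: dist_norm norm_minus_commute)
    then show "x \<in> vcell K L 0 \<inter> vcell K L l" unfolding vcell_0_Int[OF l] using x H_def by simp
  qed
  have "vcell K L 0 \<inter> vcell K L l \<subseteq> H"
    using vcell_0_Int[OF l] vcell_0_subset unfolding H_def by auto
  moreover have "aff_dim (H \<inter> ball c r) = aff_dim H"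
  proof (rule aff_dim_convex_Int_open)
    show "convex H" unfolding H_def by (intro convex_Int subspace_imp_convex subspace_K convex_hyperplane)
  qed (use cH r in auto)
  ultimately show ?thesis
    using aff_dim_subset[OF piece] aff_dim_subset[of "vcell K L 0 \<inter> vcell K L l" H]
      aff_dim_bisector[OF lK] rel unfolding H_def strictly_relevant_def by simp
qed

(* Two distinct bisecting hyperplanes of 0 (with l and with m) cannot contain the same
   section of K: a point of the first one, moved within it, leaves the second one. *)
lemma bisector_not_contained:
  assumes "l \<in> K" "m \<in> K" "m \<noteq> 0" "m \<noteq> l"
  shows "\<not> K \<inter> {x. l \<bullet> x = (l \<bullet> l) / 2} \<subseteq> {x. m \<bullet> x = (m \<bullet> m) / 2}"
proof
  assume sub: "K \<inter> {x. l \<bullet> x = (l \<bullet> l) / 2} \<subseteq> {x. m \<bullet> x = (m \<bullet> m) / 2}"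
  define c where "c = (1/2) *\<^sub>R l"
  define w where "w = (l \<bullet> l) *\<^sub>R m - (m \<bullet> l) *\<^sub>R l"
  have cK: "c \<in> K" unfolding c_def using subspace_scale[OF subspace_K assms(1)] .
  have wK: "w \<in> K" unfolding w_def
    using subspace_diff[OF subspace_K] subspace_scale[OF subspace_K] assms(1,2) by auto
  have "l \<bullet> w = 0" unfolding w_def by (simp add: inner_diff_right inner_commute)
  then have "c \<in> K \<inter> {x. l \<bullet> x = (l \<bullet> l) / 2}" "c + w \<in> K \<inter> {x. l \<bullet> x = (l \<bullet> l) / 2}"
    using cK wK subspace_add[OF subspace_K cK wK] unfolding c_def by (auto simp: inner_add_right)
  then have hc: "m \<bullet> c = (m \<bullet> m) / 2" and hcw: "m \<bullet> (c + w) = (m \<bullet> m) / 2" using sub by auto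
  have ml: "m \<bullet> l = m \<bullet> m" using hc unfolding c_def by simp
  have "m \<bullet> w = 0" using hc hcw by (simp add: inner_add_right)
  then have "(l \<bullet> l) * (m \<bullet> m) = (m \<bullet> m) * (m \<bullet> m)" unfolding w_def using ml by (simp add: inner_diff_right)
  then have "l \<bullet> l = m \<bullet> m" using assms(3) by simp
  then have "(m - l) \<bullet> (m - l) = 0" using ml by (simp add: inner_diff_left inner_diff_right inner_commute)
  then show False using assms(4) by simp
qed

(* Conversely, if the cells of 0 and l meet in a facet then l is strictly relevant: a lattice
   vector m violating the strict inequality forces the common part into a second, different
   bisecting hyperplane, which drops its dimension below that of a facet. *)
lemma strictly_relevant_if_facet:
  assumes l: "l \<in> L" and facet: "aff_dim (vcell K L 0 \<inter> vcell K L l) = aff_dim K - 1"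
  shows "strictly_relevant L l"
  unfolding strictly_relevant_def
proof (intro conjI ballI impI)
  show "l \<noteq> 0" using facet aff_dim_vcell_0 by auto
  fix m assume m: "m \<in> L" "m \<noteq> 0" "m \<noteq> l"
  show "m \<bullet> l < m \<bullet> m"
  proof (rule ccontr)
    assume "\<not> m \<bullet> l < m \<bullet> m"
    then have ml: "m \<bullet> m \<le> m \<bullet> l" by simp
    define HL where "HL = K \<inter> {x. l \<bullet> x = (l \<bullet> l) / 2}"
    define HM where "HM = {x. m \<bullet> x = (m \<bullet> m) / 2}"
    have in_both: "vcell K L 0 \<inter> vcell K L l \<subseteq> HL \<inter> HM"
    proof
      fix x assume "x \<in> vcell K L 0 \<inter> vcell K L l"
      then have x: "x \<in> K" "l \<bullet> x = (l \<bullet> l) / 2" "2 * (x \<bullet> m) \<le> m \<bullet> m"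
          "2 * (x \<bullet> (l - m)) \<le> (l - m) \<bullet> (l - m)"
        using vcell_0_Int[OF l] m(1) diff_L[OF l m(1)] unfolding vcell_0 by auto
      then have "2 * (x \<bullet> m) = m \<bullet> m"
        using ml by (simp add: inner_diff_left inner_diff_right inner_commute)
      then show "x \<in> HL \<inter> HM" using x unfolding HL_def HM_def by (simp add: inner_commute)
    qed
    have "affine (HL \<inter> HM)" "affine HL" unfolding HL_def HM_def
      by (intro affine_Int subspace_imp_affine subspace_K affine_hyperplane)+
    moreover have "HL \<inter> HM \<subset> HL"
      using bisector_not_contained L_subset_K l m unfolding HL_def HM_def by blast
    ultimately have "affine hull (vcell K L 0 \<inter> vcell K L l) \<subset> affine hull HL"
      using hull_minimal[of _ _ affine, OF in_both] hull_same[of affine HL]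
      by (metis subset_psubset_trans)
    then have "aff_dim (vcell K L 0 \<inter> vcell K L l) < aff_dim HL" by (rule aff_dim_psubset)
    then show False using facet aff_dim_bisector L_subset_K l \<open>l \<noteq> 0\<close> unfolding HL_def by auto
  qed
qed

(* Translating by a, the pair of cells of a and b becomes the pair of cells of 0 and b - a;
   so two cells share a facet exactly when the difference vector is strictly relevant. *)
lemma vcells_share_facet_iff:
  assumes a: "a \<in> L" and b: "b \<in> L"
  shows "(vcell K L a \<inter> vcell K L b face_of vcell K L a \<and>
          vcell K L a \<inter> vcell K L b face_of vcell K L b \<and>
          aff_dim (vcell K L a \<inter> vcell K L b) = aff_dim (vcell K L a) - 1 \<and>
          aff_dim (vcell K L a \<inter> vcell K L b) = aff_dim (vcell K L b) - 1)
     \<longleftrightarrow> strictly_relevant L (b - a)"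
proof -
  have "aff_dim (vcell K L a \<inter> vcell K L b) = aff_dim (vcell K L 0 \<inter> vcell K L (b - a))"
    using vcell_Int_translate[OF a b] aff_dim_translation_eq by metis
  moreover have "vcell K L a \<inter> vcell K L b face_of vcell K L b"
    using vcell_Int_face[OF b a] by (simp add: Int_commute)
  ultimately show ?thesis
    using vcell_Int_face[OF a b] aff_dim_vcell[OF a] aff_dim_vcell[OF b] diff_L[OF b a]
      facet_if_strictly_relevant strictly_relevant_if_facet by metis
qed

(* Squared lengths of lattice vectors are natural numbers, so they serve as an induction
   measure. *)
lemma sq_norm_measure_less:
  assumes y: "y \<in> L" "y \<bullet> y < x \<bullet> x" and x: "x \<in> L"
  shows "nat \<lfloor>y \<bullet> y\<rfloor> < nat \<lfloor>x \<bullet> x\<rfloor>"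
proof -
  obtain a b where ab: "y \<bullet> y = of_int a" "x \<bullet> x = of_int b"
    using inner_Ints[OF y(1) y(1)] inner_Ints[OF x x] by (auto elim!: Ints_cases)
  moreover have "0 \<le> a" using inner_ge_zero[of y] ab by simp
  ultimately show ?thesis using y(2) by simp
qed

(* A set S of lattice vectors generates L as soon as every other nonzero lattice vector
   splits without obtuse angle: the two parts are strictly shorter, and squared lengths
   are natural numbers, so induction on the squared length applies. *)
lemma subgroup_gen_eq_L:
  assumes S: "S \<subseteq> L"
    and splits: "\<And>x. x \<in> L \<Longrightarrow> x \<noteq> 0 \<Longrightarrow> x \<notin> S \<Longrightarrow> obtuse_free_split L x"
  shows "subgroup_gen S = L"
proof
  show "subgroup_gen S \<subseteq> L"
    unfolding subgroup_gen_def using S zero_L diff_L by (intro Inter_lower) auto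
  show "L \<subseteq> subgroup_gen S"
    unfolding subgroup_gen_def
  proof (rule Inter_greatest)
    fix H assume "H \<in> {H. S \<subseteq> H \<and> 0 \<in> H \<and> (\<forall>a\<in>H. \<forall>b\<in>H. a - b \<in> H)}"
    then have H: "S \<subseteq> H" "0 \<in> H" "\<And>a b. a \<in> H \<Longrightarrow> b \<in> H \<Longrightarrow> a - b \<in> H" by auto
    have add_H: "a + b \<in> H" if "a \<in> H" "b \<in> H" for a b
      using H(3)[OF that(1) H(3)[OF H(2) that(2)]] by simp
    have "x \<in> L \<longrightarrow> x \<in> H" for x
    proof (induction x rule: measure_induct_rule[where f = "\<lambda>x. nat \<lfloor>x \<bullet> x\<rfloor>"])
      case (less x)
      show ?case
      proof
        assume x: "x \<in> L"
        show "x \<in> H"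
        proof (cases "x = 0 \<or> x \<in> S")
          case True then show ?thesis using H by auto
        next
          case False
          then obtain \<mu> \<nu> where mn: "\<mu> \<in> L" "\<nu> \<in> L" "\<mu> \<noteq> 0" "\<nu> \<noteq> 0" "x = \<mu> + \<nu>" "0 \<le> \<mu> \<bullet> \<nu>"
            using splits[OF x] unfolding obtuse_free_split_def by blast
          have "\<mu> \<in> H" "\<nu> \<in> H"
            using less sq_norm_measure_less[OF _ _ x] mn(1,2) split_parts_shorter[OF mn(5,3,4,6)] by auto
          then show ?thesis using add_H mn(5) by simp
        qed
      qed
    qed
    then show "L \<subseteq> H" by blast
  qed
qed

end

lemma dcob_nth: "dcob E src tgt f $ e = (if e \<in> E then f (tgt e) - f (src e) else 0)"
  unfolding dcob_def by simp

lemma dcob_add: "dcob E src tgt (\<lambda>v. f v + g v) = dcob E src tgt f + dcob E src tgt g"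
  by (simp add: vec_eq_iff dcob_nth)

lemma dcob_diff: "dcob E src tgt (\<lambda>v. f v - g v) = dcob E src tgt f - dcob E src tgt g"
  by (simp add: vec_eq_iff dcob_nth)

lemma dcob_scale: "dcob E src tgt (\<lambda>v. c * f v) = c *\<^sub>R dcob E src tgt f"
  by (simp add: vec_eq_iff dcob_nth algebra_simps)

lemma dcob_const: "dcob E src tgt (\<lambda>v. c) = 0"
  by (simp add: vec_eq_iff dcob_nth)

lemma dcob_inner:
  "dcob E src tgt f \<bullet> dcob E src tgt g = (\<Sum>e\<in>E. (f (tgt e) - f (src e)) * (g (tgt e) - g (src e)))"
proof -
  have "dcob E src tgt f \<bullet> dcob E src tgt g
      = (\<Sum>e\<in>UNIV. if e \<in> E then (f (tgt e) - f (src e)) * (g (tgt e) - g (src e)) else 0)"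
    unfolding inner_vec_def by (rule sum.cong) (auto simp: dcob_nth)
  then show ?thesis by (simp add: sum.If_cases)
qed

lemma qf_Kspace: "x \<in> Kspace E src tgt \<Longrightarrow> qf E x = norm x ^ 2"
  unfolding Kspace_def qf_def power2_norm_eq_inner
  by (auto simp: dcob_inner dcob_nth power2_eq_square intro!: sum.cong)

(* Connectivity of the induced subgraph G[S] (the empty graph counts as connected). *)
definition connected_in :: "'e set \<Rightarrow> ('e \<Rightarrow> 'v) \<Rightarrow> ('e \<Rightarrow> 'v) \<Rightarrow> 'v set \<Rightarrow> bool" where
  "connected_in E src tgt S \<longleftrightarrow> (\<forall>u\<in>S. \<forall>w\<in>S. (u, w) \<in> (adjrel E src tgt S)\<^sup>*)"

lemma reach_in: "(u, w) \<in> (adjrel E src tgt S)\<^sup>* \<Longrightarrow> u \<in> S \<Longrightarrow> w \<in> S"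
  by (induction rule: rtrancl_induct) (auto simp: adjrel_def)

lemma const_along_paths:
  assumes "(u, w) \<in> (adjrel E src tgt S)\<^sup>*"
    and "\<forall>e\<in>E. src e \<in> S \<and> tgt e \<in> S \<longrightarrow> g (src e) = g (tgt e)"
  shows "g u = g w"
  using assms(1)
proof (induction rule: rtrancl_induct)
  case (step y z)
  then show ?case using assms(2) unfolding adjrel_def by auto
qed simp

lemma const_on_connected:
  assumes "connected_in E src tgt S" "u \<in> S" "w \<in> S"
    and "\<forall>e\<in>E. src e \<in> S \<and> tgt e \<in> S \<longrightarrow> g (src e) = g (tgt e)"
  shows "g u = g w"
  using assms(1-3) const_along_paths[OF _ assms(4)] unfolding connected_in_def by blast

lemma ncomp_eq_1_iff: "ncomp E src tgt S = 1 \<longleftrightarrow> S \<noteq> {} \<and> connected_in E src tgt S"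
proof
  assume "ncomp E src tgt S = 1"
  then obtain X where X: "(\<lambda>v. (adjrel E src tgt S)\<^sup>* `` {v}) ` S = {X}"
    unfolding ncomp_def by (auto simp: card_1_singleton_iff)
  then have reach: "(adjrel E src tgt S)\<^sup>* `` {u} = X" if "u \<in> S" for u
    using that by (metis image_eqI singletonD)
  have "(u, w) \<in> (adjrel E src tgt S)\<^sup>*" if "u \<in> S" "w \<in> S" for u w
  proof -
    have "w \<in> (adjrel E src tgt S)\<^sup>* `` {w}" by simp
    then have "w \<in> (adjrel E src tgt S)\<^sup>* `` {u}" using reach[OF that(1)] reach[OF that(2)] by simp
    then show ?thesis by simp
  qed
  then have "connected_in E src tgt S" unfolding connected_in_def by blast
  moreover have "S \<noteq> {}" using X by auto
  ultimately show "S \<noteq> {} \<and> connected_in E src tgt S" by simp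
next
  assume S: "S \<noteq> {} \<and> connected_in E src tgt S"
  have reach: "(adjrel E src tgt S)\<^sup>* `` {u} = S" if u: "u \<in> S" for u
  proof
    show "(adjrel E src tgt S)\<^sup>* `` {u} \<subseteq> S" using reach_in[OF _ u] by blast
    show "S \<subseteq> (adjrel E src tgt S)\<^sup>* `` {u}" using S u unfolding connected_in_def by blast
  qed
  have "(\<lambda>v. (adjrel E src tgt S)\<^sup>* `` {v}) ` S = (\<lambda>v. S) ` S"
    by (rule image_cong) (simp_all add: reach)
  then have "(\<lambda>v. (adjrel E src tgt S)\<^sup>* `` {v}) ` S = {S}" using S by (metis image_constant_conv)
  then show "ncomp E src tgt S = 1" unfolding ncomp_def by simp
qed

lemma ncomp_eq_0_iff: "finite S \<Longrightarrow> ncomp E src tgt S = 0 \<longleftrightarrow> S = {}"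
  unfolding ncomp_def card_eq_0_iff by blast

locale conn_graph =
  fixes V :: "'v set" and E :: "'e::finite set" and src tgt :: "'e \<Rightarrow> 'v"
  assumes finite_V: "finite V"
    and ends_in_V: "\<forall>e\<in>E. src e \<in> V \<and> tgt e \<in> V"
    and connected: "graph_connected V E src tgt"
begin

abbreviation "d \<equiv> dcob E src tgt"
abbreviation "K \<equiv> Kspace E src tgt"
abbreviation "L \<equiv> Lat E src tgt"

lemma L_iff: "x \<in> L \<longleftrightarrow> (\<exists>f. x = d f \<and> (\<forall>v. f v \<in> \<int>))"
  unfolding Lat_def by auto

sublocale integral_lattice K L
proof
  show "subspace K"
    unfolding subspace_def Kspace_def
  proof (intro conjI ballI allI)
    show "0 \<in> range d" using dcob_const[of E src tgt 0] by (metis rangeI)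
    show "x + y \<in> range d" if "x \<in> range d" "y \<in> range d" for x y
      using that dcob_add[symmetric] by blast
    show "c *\<^sub>R x \<in> range d" if "x \<in> range d" for c x
      using that dcob_scale[symmetric] by blast
  qed
  show "L \<subseteq> K" unfolding Lat_def Kspace_def by auto
  show "0 \<in> L" unfolding L_iff by (intro exI[of _ "\<lambda>v. 0"]) (simp add: dcob_const)
  fix a b assume "a \<in> L" "b \<in> L"
  then obtain f g where fg: "a = d f" "\<forall>v. f v \<in> \<int>" "b = d g" "\<forall>v. g v \<in> \<int>"
    unfolding L_iff by blast
  show "a - b \<in> L" unfolding L_iff
    by (intro exI[of _ "\<lambda>v. f v - g v"]) (simp add: fg dcob_diff)
  show "a \<bullet> b \<in> \<int>" using fg by (simp add: dcob_inner Ints_sum Ints_mult Ints_diff)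
qed

lemma dcob_cong: "(\<And>v. v \<in> V \<Longrightarrow> f v = g v) \<Longrightarrow> d f = d g"
  using ends_in_V by (auto simp: vec_eq_iff dcob_nth)

lemma connected_V: "V \<noteq> {}" "connected_in E src tgt V"
  using connected unfolding graph_connected_def connected_in_def by auto

lemma dcob_eq_0_imp_const:
  assumes "d g = 0" "u \<in> V" "w \<in> V"
  shows "g u = g w"
proof (rule const_on_connected[OF connected_V(2) assms(2,3)])
  show "\<forall>e\<in>E. src e \<in> V \<and> tgt e \<in> V \<longrightarrow> g (src e) = g (tgt e)"
    using assms(1) by (auto simp: vec_eq_iff dcob_nth split: if_splits)
qed

lemma dcob_charf_nonzero:
  assumes "S \<subseteq> V" "S \<noteq> {}" "S \<noteq> V"
  shows "d (charf S) \<noteq> 0"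
proof -
  obtain u w where "u \<in> S" "w \<in> V" "w \<notin> S" using assms by blast
  then show ?thesis using dcob_eq_0_imp_const[of "charf S" u w] assms(1) unfolding charf_def by auto
qed

lemma dcob_charf_L: "d (charf C) \<in> L"
  unfolding L_iff charf_def by auto

lemma dcob_charf_compl: "C \<subseteq> V \<Longrightarrow> d (charf (V - C)) = - d (charf C)"
proof -
  assume "C \<subseteq> V"
  then have "d (charf (V - C)) = d (\<lambda>v. 1 - charf C v)"
    by (intro dcob_cong) (auto simp: charf_def)
  then show ?thesis by (simp add: dcob_diff dcob_const)
qed

lemma kappa_eq_1_iff:
  assumes "C \<subseteq> V"
  shows "kappa V E src tgt C = 1 \<longleftrightarrow>
    C \<noteq> {} \<and> V - C \<noteq> {} \<and> connected_in E src tgt C \<and> connected_in E src tgt (V - C)"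
proof -
  have fin: "finite C" "finite (V - C)" using finite_V assms finite_subset by auto
  have V1: "ncomp E src tgt V = 1" using connected_V ncomp_eq_1_iff by blast
  have "kappa V E src tgt C = 1 \<longleftrightarrow> ncomp E src tgt C = 1 \<and> ncomp E src tgt (V - C) = 1"
  proof -
    have "C = {} \<Longrightarrow> ncomp E src tgt (V - C) = 1" "V - C = {} \<Longrightarrow> ncomp E src tgt C = 1"
      using V1 assms by (simp_all add: Diff_eq_empty_iff subset_antisym)
    then show ?thesis
      using ncomp_eq_0_iff[OF fin(1), of E src tgt] ncomp_eq_0_iff[OF fin(2), of E src tgt]
      unfolding kappa_def by fastforce
  qed
  then show ?thesis using ncomp_eq_1_iff by metis
qed

lemma bonds_uminus: "x \<in> bonds V E src tgt \<Longrightarrow> - x \<in> bonds V E src tgt"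
proof -
  assume "x \<in> bonds V E src tgt"
  then obtain C where C: "x = d (charf C)" "C \<subseteq> V" "kappa V E src tgt C = 1"
    unfolding bonds_def by auto
  have "kappa V E src tgt (V - C) = 1"
    using C(2,3) unfolding kappa_def by (simp add: double_diff)
  moreover have "- x = d (charf (V - C))" using dcob_charf_compl[OF C(2)] C(1) by simp
  ultimately show ?thesis unfolding bonds_def by auto
qed


lemma bonds_L: "bonds V E src tgt \<subseteq> L"
  unfolding bonds_def using dcob_charf_L by auto

(* If G[S] is disconnected, splitting S into one component R and the rest S - R splits
   the cut vector of S into two orthogonal nonzero lattice vectors (no edge joins R and S - R). *)
lemma disconnected_shore_splits:
  assumes S: "S \<subseteq> V" "S \<noteq> V" and uw: "u \<in> S" "w \<in> S" "(u, w) \<notin> (adjrel E src tgt S)\<^sup>*"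
  shows "obtuse_free_split L (d (charf S))"
proof -
  define R where "R = (adjrel E src tgt S)\<^sup>* `` {u}"
  have RS: "R \<subseteq> S" using reach_in[OF _ uw(1)] unfolding R_def by auto
  have "u \<in> R" "w \<notin> R" using uw(3) unfolding R_def by auto
  have closed: "src e \<in> R \<longleftrightarrow> tgt e \<in> R" if "e \<in> E" "src e \<in> S" "tgt e \<in> S" for e
  proof -
    have "(src e, tgt e) \<in> adjrel E src tgt S" "(tgt e, src e) \<in> adjrel E src tgt S"
      using that unfolding adjrel_def by auto
    then show ?thesis unfolding R_def using rtrancl_into_rtrancl by (metis Image_singleton_iff)
  qed
  have "charf S = (\<lambda>v. charf R v + charf (S - R) v)"
    using RS unfolding charf_def by (auto simp: fun_eq_iff)
  then have sum: "d (charf S) = d (charf R) + d (charf (S - R))" by (simp add: dcob_add)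
  have "d (charf R) \<bullet> d (charf (S - R)) = 0"
    unfolding dcob_inner
  proof (rule sum.neutral, rule ballI)
    fix e assume "e \<in> E"
    then show "(charf R (tgt e) - charf R (src e)) * (charf (S - R) (tgt e) - charf (S - R) (src e)) = 0"
      using closed[of e] RS unfolding charf_def by (cases "src e \<in> S \<and> tgt e \<in> S") auto
  qed
  moreover have "d (charf R) \<noteq> 0" using dcob_charf_nonzero[of R] RS S \<open>u \<in> R\<close> by auto
  moreover have "d (charf (S - R)) \<noteq> 0"
    using dcob_charf_nonzero[of "S - R"] S \<open>w \<notin> R\<close> uw(2) by auto
  ultimately show ?thesis
    unfolding obtuse_free_split_def using sum dcob_charf_L
    by (intro exI[of _ "d (charf R)"] exI[of _ "d (charf (S - R))"]) simp
qed

lemma nonbond_cut_splits: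
  assumes C: "C \<subseteq> V" "C \<noteq> {}" "C \<noteq> V" and not_bond: "kappa V E src tgt C \<noteq> 1"
  shows "obtuse_free_split L (d (charf C))"
proof -
  have "\<not> connected_in E src tgt C \<or> \<not> connected_in E src tgt (V - C)"
    using kappa_eq_1_iff[OF C(1)] not_bond C by auto
  then show ?thesis
  proof
    assume "\<not> connected_in E src tgt C"
    then obtain u w where "u \<in> C" "w \<in> C" "(u, w) \<notin> (adjrel E src tgt C)\<^sup>*"
      unfolding connected_in_def by blast
    then show ?thesis using disconnected_shore_splits[OF C(1,3)] by simp
  next
    assume "\<not> connected_in E src tgt (V - C)"
    then obtain u w where "u \<in> V - C" "w \<in> V - C" "(u, w) \<notin> (adjrel E src tgt (V - C))\<^sup>*"
      unfolding connected_in_def by blast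
    moreover have "V - C \<subseteq> V" "V - C \<noteq> V" using C by auto
    ultimately have "obtuse_free_split L (d (charf (V - C)))"
      using disconnected_shore_splits by simp
    then have "obtuse_free_split L (- d (charf (V - C)))" by (rule obtuse_free_split_uminus)
    then show ?thesis using dcob_charf_compl[OF C(1)] by simp
  qed
qed

(* An integer function whose values on V spread by at least 2 splits into its truncations
   below and above an intermediate level t; the two coboundaries meet at a nonnegative
   inner product since min and max move in the same direction along every edge. *)
lemma wide_range_splits:
  assumes f: "\<forall>v. f v \<in> \<int>" and uw: "u \<in> V" "w \<in> V" "f u + 2 \<le> f w"
  shows "obtuse_free_split L (d f)"
proof -
  define t where "t = f u + 1"
  define \<mu> where "\<mu> = d (\<lambda>v. min (f v) t)"
  define \<nu> where "\<nu> = d (\<lambda>v. max (f v) t)"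
  have t: "t \<in> \<int>" using f unfolding t_def by auto
  have "min (f v) t \<in> \<int>" "max (f v) t \<in> \<int>" for v using f t by (simp_all add: min_def max_def)
  then have "\<mu> \<in> L" "\<nu> \<in> L" unfolding \<mu>_def \<nu>_def L_iff by blast+
  moreover have "min (f u) t \<noteq> min (f w) t" "max (f u) t \<noteq> max (f w) t"
    using uw(3) unfolding t_def by auto
  then have "\<mu> \<noteq> 0" "\<nu> \<noteq> 0"
    unfolding \<mu>_def \<nu>_def using dcob_eq_0_imp_const uw(1,2) by blast+
  moreover have "d f = \<mu> + \<nu>"
  proof -
    have "(\<lambda>v. min (f v) t + max (f v) t) = (\<lambda>v. f v + t)" by (auto simp: fun_eq_iff)
    then have "\<mu> + \<nu> = d (\<lambda>v. f v + t)" unfolding \<mu>_def \<nu>_def by (simp add: dcob_add[symmetric])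
    then show ?thesis by (simp add: dcob_add dcob_const)
  qed
  moreover have "0 \<le> \<mu> \<bullet> \<nu>"
  proof -
    have "0 \<le> (min a t - min b t) * (max a t - max b t)" for a b :: real
      by (cases "a \<le> t"; cases "b \<le> t") (auto simp: min_def max_def mult_nonneg_nonneg mult_nonpos_nonpos)
    then show ?thesis unfolding \<mu>_def \<nu>_def dcob_inner by (simp add: sum_nonneg)
  qed
  ultimately show ?thesis unfolding obtuse_free_split_def by blast
qed

lemma two_valued_potential_is_cut:
  assumes f: "\<forall>v. f v \<in> \<int>" and uw: "u \<in> V" "w \<in> V" "f w = f u + 1"
    and range: "\<forall>v\<in>V. f u \<le> f v \<and> f v \<le> f w"
  obtains C where "C \<subseteq> V" "C \<noteq> {}" "C \<noteq> V" "d f = d (charf C)"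
proof -
  define C where "C = {v \<in> V. f v = f w}"
  have "f v = f u + charf C v" if v: "v \<in> V" for v
  proof -
    have le: "f u \<le> f v" "f v \<le> f u + 1" using range v uw(3) by auto
    have "f v = f u \<or> f v = f u + 1 \<or> f u + 2 \<le> f v"
      by (rule Ints_le_cases) (use f le in auto)
    then have "f v = f u \<or> f v = f u + 1" using le by auto
    then show ?thesis using v uw(3) unfolding C_def charf_def by auto
  qed
  then have "d f = d (\<lambda>v. f u + charf C v)" by (rule dcob_cong)
  then have "d f = d (charf C)" by (simp add: dcob_add dcob_const)
  moreover have "w \<in> C" "u \<notin> C" using uw unfolding C_def by auto
  moreover have "C \<subseteq> V" unfolding C_def by auto
  ultimately show ?thesis using that uw(1) by blast
qed

(* Every lattice vector is zero, a bond, or splits: according to whether its integer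
   potential takes one value, two consecutive values (a cut), or spreads further. *)
lemma lattice_trichotomy:
  assumes x: "x \<in> L"
  shows "x = 0 \<or> x \<in> bonds V E src tgt \<or> obtuse_free_split L x"
proof -
  obtain f where f: "x = d f" "\<forall>v. f v \<in> \<int>" using x unfolding L_iff by blast
  have fin: "finite (f ` V)" "f ` V \<noteq> {}" using finite_V connected_V by auto
  obtain u where u: "u \<in> V" "f u = Min (f ` V)" using Min_in[OF fin] by auto
  obtain w where w: "w \<in> V" "f w = Max (f ` V)" using Max_in[OF fin] by auto
  have range: "\<forall>v\<in>V. f u \<le> f v \<and> f v \<le> f w" using fin u w by auto
  have "f w = f u \<or> f w = f u + 1 \<or> f u + 2 \<le> f w"
    by (rule Ints_le_cases) (use f(2) range w(1) in auto)
  then consider "f w = f u" | "f w = f u + 1" | "f u + 2 \<le> f w" by blast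
  then show ?thesis
  proof cases
    case 1
    then have "d f = d (\<lambda>v. f u)" using range by (intro dcob_cong) (metis order_antisym)
    then show ?thesis using f(1) by (simp add: dcob_const)
  next
    case 2
    obtain C where C: "C \<subseteq> V" "C \<noteq> {}" "C \<noteq> V" "d f = d (charf C)"
      using two_valued_potential_is_cut[OF f(2) u(1) w(1) 2 range] .
    show ?thesis
    proof (cases "kappa V E src tgt C = 1")
      case True
      then show ?thesis using C(1,4) f(1) unfolding bonds_def by blast
    next
      case False
      then show ?thesis using nonbond_cut_splits[OF C(1-3)] C(4) f(1) by simp
    qed
  next
    case 3
    then show ?thesis using wide_range_splits[OF f(2) u(1) w(1)] f(1) by simp
  qed
qed

lemma bonds_generate_L: "subgroup_gen (bonds V E src tgt) = L"
  by (rule subgroup_gen_eq_L[OF bonds_L]) (use lattice_trichotomy in blast)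


lemma crossing_edge:
  assumes "C \<subseteq> V" "c \<in> C" "z \<in> V" "z \<notin> C"
  obtains e where "e \<in> E" "charf C (src e) \<noteq> charf C (tgt e)"
proof -
  have "charf C c \<noteq> charf C z" using assms unfolding charf_def by auto
  then show ?thesis
    using const_on_connected[OF connected_V(2), of c z "charf C"] assms that by blast
qed

(* An integer potential whose increment along every edge is either 0 or the increment of the
   indicator of a bond C is constant or differs from that indicator by a constant:
   it is constant on both (connected) shores, and a crossing edge pins down the jump. *)
lemma potential_following_bond:
  assumes C: "C \<subseteq> V" "C \<noteq> {}" "C \<noteq> V" "connected_in E src tgt C" "connected_in E src tgt (V - C)"
    and follows: "\<forall>e\<in>E. g (tgt e) - g (src e) = 0 \<or>
                         g (tgt e) - g (src e) = charf C (tgt e) - charf C (src e)"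
  shows "d g = 0 \<or> d g = d (charf C)"
proof -
  obtain c z where cz: "c \<in> C" "z \<in> V" "z \<notin> C" using C(1-3) by blast
  have inside: "g (src e) = g (tgt e)" if "e \<in> E" "charf C (src e) = charf C (tgt e)" for e
    using follows that by auto
  have on_C: "g v = g c" if "v \<in> C" for v
    by (rule const_on_connected[OF C(4) that cz(1)]) (use inside in \<open>auto simp: charf_def\<close>)
  have on_D: "g v = g z" if "v \<in> V - C" for v
    by (rule const_on_connected[OF C(5) that]) (use inside cz in \<open>auto simp: charf_def\<close>)
  obtain e where e: "e \<in> E" "charf C (src e) \<noteq> charf C (tgt e)"
    using crossing_edge[OF C(1) cz] .
  have ends: "src e \<in> V" "tgt e \<in> V" using ends_in_V e(1) by auto
  have jump: "g c - g z = 0 \<or> g c - g z = 1"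
  proof (cases "src e \<in> C")
    case True
    then have "tgt e \<notin> C" using e(2) unfolding charf_def by auto
    then show ?thesis
      using follows e(1) on_C[OF True] on_D[of "tgt e"] ends True unfolding charf_def by auto
  next
    case False
    then have "tgt e \<in> C" using e(2) unfolding charf_def by (auto split: if_splits)
    then show ?thesis
      using follows e(1) on_C[of "tgt e"] on_D[of "src e"] ends False unfolding charf_def by auto
  qed
  have "d g = d (\<lambda>v. g z + (g c - g z) * charf C v)"
    by (rule dcob_cong) (use on_C on_D in \<open>auto simp: charf_def\<close>)
  also have "\<dots> = (g c - g z) *\<^sub>R d (charf C)" by (simp add: dcob_add dcob_const dcob_scale)
  finally show ?thesis using jump by auto
qed

(* Bonds are strictly relevant: for a lattice vector m = d g, the difference m.m - m.l
   is a sum over edges of nonnegative terms a (a - b) (a integer, b in {-1,0,1});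
   if it vanished, g would follow the bond edge by edge, forcing m = 0 or m = l. *)
lemma bond_strictly_relevant:
  assumes l: "l \<in> bonds V E src tgt"
  shows "strictly_relevant L l"
proof -
  obtain C where C: "l = d (charf C)" "C \<subseteq> V" "kappa V E src tgt C = 1"
    using l unfolding bonds_def by auto
  have shores: "C \<noteq> {}" "C \<noteq> V" "connected_in E src tgt C" "connected_in E src tgt (V - C)"
    using kappa_eq_1_iff[OF C(2)] C(3) by auto
  have "m \<bullet> l < m \<bullet> m" if m: "m \<in> L" "m \<noteq> 0" "m \<noteq> l" for m
  proof (rule ccontr)
    assume "\<not> m \<bullet> l < m \<bullet> m"
    obtain g where g: "m = d g" "\<forall>v. g v \<in> \<int>" using m(1) unfolding L_iff by blast
    define a where "a e = g (tgt e) - g (src e)" for e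
    define b where "b e = charf C (tgt e) - charf C (src e)" for e
    have term_nonneg: "0 \<le> a e * (a e - b e)" for e
    proof -
      obtain k where k: "a e = of_int k" using g(2) unfolding a_def by (metis Ints_cases Ints_diff)
      have "k \<ge> 1 \<or> k = 0 \<or> k \<le> -1" by arith
      then show ?thesis using k unfolding b_def charf_def
        by (auto intro: mult_nonneg_nonneg mult_nonpos_nonpos)
    qed
    have "(\<Sum>e\<in>E. a e * (a e - b e)) = m \<bullet> m - m \<bullet> l"
      unfolding g(1) C(1) dcob_inner a_def b_def by (simp add: sum_subtractf right_diff_distrib)
    also have "\<dots> \<le> 0" using \<open>\<not> m \<bullet> l < m \<bullet> m\<close> by simp
    finally have "\<forall>e\<in>E. a e * (a e - b e) = 0"
      using sum_nonneg_eq_0_iff[of E "\<lambda>e. a e * (a e - b e)"] term_nonneg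
      by (simp add: order_antisym sum_nonneg)
    then have "\<forall>e\<in>E. a e = 0 \<or> a e = b e" by simp
    then have "m = 0 \<or> m = l"
      using potential_following_bond[OF C(2) shores] g(1) C(1) unfolding a_def b_def by simp
    then show False using m by simp
  qed
  moreover have "l \<noteq> 0" using dcob_charf_nonzero[OF C(2) shores(1,2)] C(1) by simp
  ultimately show ?thesis unfolding strictly_relevant_def by blast
qed

lemma strictly_relevant_iff_bond:
  assumes "l \<in> L"
  shows "strictly_relevant L l \<longleftrightarrow> l \<in> bonds V E src tgt"
proof
  assume rel: "strictly_relevant L l"
  then have "l \<noteq> 0" "\<not> obtuse_free_split L l"
    using split_not_strictly_relevant unfolding strictly_relevant_def by auto
  then show "l \<in> bonds V E src tgt" using lattice_trichotomy[OF assms] by simp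
qed (rule bond_strictly_relevant)

lemma voronoi_eq_vcell:
  assumes "a \<in> L"
  shows "voronoi E src tgt a = vcell K L a"
proof -
  have "qf E (x - a) \<le> qf E (x - m) \<longleftrightarrow> dist x a \<le> dist x m" if "x \<in> K" "m \<in> L" for x m
  proof -
    have "x - a \<in> K" "x - m \<in> K"
      using that assms L_subset_K subspace_diff[OF subspace_K] by auto
    then show ?thesis by (simp add: qf_Kspace dist_norm)
  qed
  then show ?thesis unfolding voronoi_def vcell_def by auto
qed

lemma delaunay_adj_iff_bond:
  assumes "a \<in> L" "b \<in> L"
  shows "delaunay_adj E src tgt a b \<longleftrightarrow> b - a \<in> bonds V E src tgt"
  using vcells_share_facet_iff[OF assms] strictly_relevant_iff_bond[OF diff_L[OF assms(2,1)]]
  unfolding delaunay_adj_def Let_def voronoi_eq_vcell[OF assms(1)] voronoi_eq_vcell[OF assms(2)]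
  by simp

lemma cayley_adj_iff_bond: "cayley_adj (bonds V E src tgt) a b \<longleftrightarrow> b - a \<in> bonds V E src tgt"
  unfolding cayley_adj_def using bonds_uminus[of "a - b"] bonds_uminus[of "b - a"] by auto

end

theorem mainTheorem16:
  fixes V :: "'v set" and E :: "'e::finite set" and src tgt :: "'e \<Rightarrow> 'v"
  assumes "finite V"
    and "\<forall>e\<in>E. src e \<in> V \<and> tgt e \<in> V"
    and "graph_connected V E src tgt"
  shows "subgroup_gen (bonds V E src tgt) = Lat E src tgt \<and>
    (\<exists>\<phi>. bij_betw \<phi> (Lat E src tgt) (Lat E src tgt) \<and>
       (\<forall>a\<in>Lat E src tgt. \<forall>b\<in>Lat E src tgt.
          delaunay_adj E src tgt a b \<longleftrightarrow> cayley_adj (bonds V E src tgt) (\<phi> a) (\<phi> b)))"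
proof -
  interpret conn_graph V E src tgt using assms by unfold_locales
  have "\<forall>a\<in>L. \<forall>b\<in>L. delaunay_adj E src tgt a b \<longleftrightarrow> cayley_adj (bonds V E src tgt) (id a) (id b)"
    using delaunay_adj_iff_bond cayley_adj_iff_bond by simp
  then show ?thesis using bonds_generate_L bij_betw_id by (intro conjI exI[of _ id]) simp_all
qed

end
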